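(* Let $d_1,d_2\in\mathbb{N}$ and let $X,Y\in\mathcal{M}_{d_1}\otimes\mathcal{M}_{d_1}$ be Hermitian operators such that there exists $\ket{\alpha}\in\mathbb{C}^{d_1}\otimes\mathbb{C}^{d_1}$ with $\bra{\alpha}X\ket{\alpha}=0$ and $\bra{\alpha}Y\ket{\alpha}>0$. Let \[ Z_{A_1B_1A_2B_2} = X_{A_1B_1}\otimes(\mathbb{1}-\omega)_{A_2B_2} + Y_{A_1B_1}\otimes \omega_{A_2B_2} \] on $\mathbb{C}^{d_1}\otimes\mathbb{C}^{d_1}\otimes\mathbb{C}^{d_2}\otimes\mathbb{C}^{d_2}$ (factors labelled $A_1,B_1,A_2,B_2$), where $\omega$ is the maximally entangled projector on $\mathbb{C}^{d_2}\otimes\mathbb{C}^{d_2}$. Then for any $d_2'\in\mathbb{N}$ and any linear map $\mathcal{L}:\mathcal{M}_{d_2}\to\mathcal{M}_{d_2'}$ that is not completely positive, \[ (\mathrm{id}_{A_1}\otimes\mathrm{id}_{B_1}\otimes\mathcal{L}_{A_2}\otimes\mathrm{id}_{B_2})(Z_{A_1B_1A_2B_2}) \] is not positive semidefinite.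
   Context: $\mathcal{M}_d$ denotes complex $d\times d$ matrices. $\omega=\ket{\Omega}\bra{\Omega}$ with $\ket{\Omega}=\frac{1}{\sqrt{d_2}}\sum_{i=1}^{d_2}\ket{i}\otimes\ket{i}$. A linear map $\mathcal{L}:\mathcal{M}_{d}\to\mathcal{M}_{d'}$ is completely positive if $\mathrm{id}_k\otimes\mathcal{L}$ maps positive semidefinite matrices to positive semidefinite matrices for every $k\in\mathbb{N}$. *)

theory Defs
  imports Complex_Main "HOL-Library.Complex_Order"
begin

text \<open>Complex matrices indexed by a finite index type: entries A i j.
  An operator on C^{d1} (x) C^{d1} (x) C^{d2} (x) C^{d2} is indexed by
  ((a1,b1),(a2,b2)), with factors A1,B1,A2,B2.\<close>

type_synonym 'i cmat = "'i \<Rightarrow> 'i \<Rightarrow> complex"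

definition hermitian :: "('i::finite) cmat \<Rightarrow> bool" where
  "hermitian A \<longleftrightarrow> (\<forall>i j. A j i = cnj (A i j))"

definition qform_on :: "'i set \<Rightarrow> 'i cmat \<Rightarrow> ('i \<Rightarrow> complex) \<Rightarrow> complex" where
  "qform_on S A v = (\<Sum>i\<in>S. \<Sum>j\<in>S. cnj (v i) * A i j * v j)"

abbreviation qform :: "('i::finite) cmat \<Rightarrow> ('i \<Rightarrow> complex) \<Rightarrow> complex" where
  "qform A v \<equiv> qform_on UNIV A v"

text \<open>Positive semidefinite on index set S (complex order: 0 \<le> z iff z real nonneg).\<close>
definition psd_on :: "'i set \<Rightarrow> 'i cmat \<Rightarrow> bool" where
  "psd_on S A \<longleftrightarrow> (\<forall>v. 0 \<le> qform_on S A v)"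

abbreviation psd :: "('i::finite) cmat \<Rightarrow> bool" where
  "psd A \<equiv> psd_on UNIV A"

definition idm :: "'i cmat" where
  "idm i j = (if i = j then 1 else 0)"

definition kron :: "'i cmat \<Rightarrow> 'j cmat \<Rightarrow> ('i \<times> 'j) cmat" where
  "kron A B = (\<lambda>(i,k) (j,l). A i j * B k l)"

definition Omega_vec :: "('b::finite \<times> 'b) \<Rightarrow> complex" where
  "Omega_vec = (\<lambda>(i,j). if i = j then complex_of_real (1 / sqrt (real (card (UNIV :: 'b set)))) else 0)"

definition omega :: "('b::finite \<times> 'b) cmat" where
  "omega p q = Omega_vec p * cnj (Omega_vec q)"

definition clinear_map :: "('b cmat \<Rightarrow> 'c cmat) \<Rightarrow> bool" where
  "clinear_map L \<longleftrightarrow>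
     (\<forall>A B. L (\<lambda>i j. A i j + B i j) = (\<lambda>i j. L A i j + L B i j)) \<and>
     (\<forall>c A. L (\<lambda>i j. c * A i j) = (\<lambda>i j. c * L A i j))"

text \<open>(id_k \<otimes> L)(A) for A on C^k (x) C^{d}, indices (n,r) with n < k.\<close>
definition id_tensor :: "('b cmat \<Rightarrow> 'c cmat) \<Rightarrow> (nat \<times> 'b) cmat \<Rightarrow> (nat \<times> 'c) cmat" where
  "id_tensor L A = (\<lambda>(i,p) (j,q). L (\<lambda>r s. A (i,r) (j,s)) p q)"

definition completely_positive :: "('b::finite cmat \<Rightarrow> 'c::finite cmat) \<Rightarrow> bool" where
  "completely_positive L \<longleftrightarrow>
     (\<forall>k::nat. \<forall>A. psd_on ({..<k} \<times> UNIV) A \<longrightarrow> psd_on ({..<k} \<times> UNIV) (id_tensor L A))"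

definition apply_A2 :: "('b cmat \<Rightarrow> 'c cmat) \<Rightarrow> (('a \<times> 'a) \<times> ('b \<times> 'b)) cmat
    \<Rightarrow> (('a \<times> 'a) \<times> ('c \<times> 'b)) cmat" where
  "apply_A2 L Z = (\<lambda>((a1,b1),(c,b2)) ((a1',b1'),(c',b2')).
      L (\<lambda>r s. Z ((a1,b1),(r,b2)) ((a1',b1'),(s,b2'))) c c')"

end

theory Submission
  imports Defs
begin

(* Compressing the A1B1 factor of W = (id (x) id (x) L (x) id)(Z) by |alpha>, i.e. passing to
   the matrix <alpha|W|alpha> on A2'B2, kills the X-term because <alpha|X|alpha> = 0 and turns
   the Y-term into <alpha|Y|alpha>/d2 times the Choi matrix of L. Compressions preserve
   positivity, so if W were positive semidefinite, so would be the Choi matrix of L, and L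
   would be completely positive by Choi's criterion: a positive input of id_k (x) L is a sum
   of rank-one terms v v* (peeled off one row at a time via Schur complements), and each of
   them is mapped to a compression of the Choi matrix. *)

lemma qform_on_cong:
  "(\<And>i. i \<in> S \<Longrightarrow> v i = w i) \<Longrightarrow> qform_on S A v = qform_on S A w"
  unfolding qform_on_def by (intro sum.cong refl) auto

lemma qform_on_cong_mat:
  "(\<And>i j. i \<in> S \<Longrightarrow> j \<in> S \<Longrightarrow> A i j = B i j) \<Longrightarrow> qform_on S A v = qform_on S B v"
  unfolding qform_on_def by (intro sum.cong refl) auto

lemma qform_on_scale: "qform_on S (\<lambda>i j. c * A i j) v = c * qform_on S A v"
  by (simp add: qform_on_def sum_distrib_left mult_ac)

lemma qform_on_sum:
  "finite M \<Longrightarrow> qform_on S (\<lambda>i j. \<Sum>m\<in>M. F m i j) v = (\<Sum>m\<in>M. qform_on S (F m) v)"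
  by (induction M rule: finite_induct) (simp_all add: qform_on_def algebra_simps sum.distrib)

lemma qform_on_insert:
  assumes "finite T" "x \<notin> T"
  shows "qform_on (insert x T) A v = cnj (v x) * A x x * v x + cnj (v x) * (\<Sum>j\<in>T. A x j * v j)
     + (\<Sum>i\<in>T. cnj (v i) * A i x) * v x + qform_on T A v"
  using assms unfolding qform_on_def
  by (simp add: sum.distrib sum_distrib_left sum_distrib_right algebra_simps)

lemma qform_on_restrict:
  assumes "finite S" "T \<subseteq> S"
  shows "qform_on S A (\<lambda>i. if i \<in> T then v i else 0) = qform_on T A v"
proof -
  let ?w = "\<lambda>i. if i \<in> T then v i else 0"
  have "(\<Sum>j\<in>S. cnj (?w i) * A i j * ?w j) = (\<Sum>j\<in>T. cnj (?w i) * A i j * ?w j)" for i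
    using assms by (intro sum.mono_neutral_right) auto
  moreover have "(\<Sum>j\<in>S. cnj (?w i) * A i j * ?w j) = 0" if "i \<notin> T" for i
    using that by simp
  ultimately have "qform_on S A ?w = qform_on T A ?w"
    unfolding qform_on_def by (intro sum.mono_neutral_cong_right[OF assms]) simp_all
  also have "\<dots> = qform_on T A v" by (rule qform_on_cong) simp
  finally show ?thesis .
qed

lemma qform_on_two_point:
  assumes "finite S" "i \<in> S" "j \<in> S" "i \<noteq> j"
  shows "qform_on S A (\<lambda>k. if k = i then t else if k = j then s else 0) =
    cnj t * A i i * t + cnj t * A i j * s + cnj s * A j i * t + cnj s * A j j * s"
proof -
  have "(\<lambda>k. if k = i then t else if k = j then s else 0)
      = (\<lambda>k. if k \<in> {i, j} then if k = i then t else s else 0)"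
    by auto
  then have "qform_on S A (\<lambda>k. if k = i then t else if k = j then s else 0)
      = qform_on {i, j} A (\<lambda>k. if k = i then t else s)"
    using qform_on_restrict[OF assms(1), of "{i, j}" A "\<lambda>k. if k = i then t else s"] assms(2,3)
    by simp
  also have "\<dots> = cnj t * A i i * t + cnj t * A i j * s + cnj s * A j i * t + cnj s * A j j * s"
    using assms(4) by (simp add: qform_on_def)
  finally show ?thesis .
qed

lemma psd_onD: "psd_on S A \<Longrightarrow> 0 \<le> qform_on S A v"
  unfolding psd_on_def by simp

lemma psd_on_subset:
  assumes "psd_on S A" "finite S" "T \<subseteq> S"
  shows "psd_on T A"
  unfolding psd_on_def
proof
  fix v
  show "0 \<le> qform_on T A v"
    using psd_onD[OF assms(1), of "\<lambda>i. if i \<in> T then v i else 0"]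
    by (simp add: qform_on_restrict[OF assms(2,3)])
qed

lemma psd_on_diag_nonneg:
  assumes "psd_on S A" "finite S" "i \<in> S"
  shows "0 \<le> A i i"
proof -
  have "qform_on S A (\<lambda>k. if k \<in> {i} then 1 else 0) = A i i"
    using qform_on_restrict[OF assms(2), of "{i}" A "\<lambda>_. 1"] assms(3) by (simp add: qform_on_def)
  then show ?thesis using psd_onD[OF assms(1)] by metis
qed

lemma psd_on_hermitian:
  assumes "psd_on S A" "finite S" "i \<in> S" "j \<in> S"
  shows "A j i = cnj (A i j)"
proof (cases "i = j")
  case True
  then show ?thesis
    using psd_on_diag_nonneg[OF assms(1-3)] by (simp add: less_eq_complex_def complex_eq_iff)
next
  case False
  have "Im (A i i) = 0" "Im (A j j) = 0"
    using psd_on_diag_nonneg[OF assms(1,2)] assms(3,4) by (auto simp: less_eq_complex_def)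
  moreover have "Im (A i i + A i j + A j i + A j j) = 0"
    using psd_onD[OF assms(1), of "\<lambda>k. if k = i then 1 else if k = j then 1 else 0"]
    by (simp add: qform_on_two_point[OF assms(2-4) False] less_eq_complex_def)
  moreover have "Im (A i i - \<i> * A i j + \<i> * A j i + A j j) = 0"
    using psd_onD[OF assms(1), of "\<lambda>k. if k = i then \<i> else if k = j then 1 else 0"]
    by (simp add: qform_on_two_point[OF assms(2-4) False] less_eq_complex_def)
  ultimately show ?thesis by (simp add: complex_eq_iff)
qed

lemma psd_on_zero_diag_row:
  assumes "psd_on S A" "finite S" "i \<in> S" "j \<in> S" and zero: "A i i = 0"
  shows "A i j = 0"
proof (rule ccontr)
  assume nonzero: "A i j \<noteq> 0"
  then have "i \<noteq> j" using zero by auto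
  define n where "n = (cmod (A i j))\<^sup>2"
  define x where "x = (Re (A j j) + 1) / (2 * n)"
  have "n > 0" using nonzero by (simp add: n_def)
  then have x: "2 * x * n = Re (A j j) + 1" by (simp add: x_def)
  have n: "cnj (A i j) * A i j = complex_of_real n"
    unfolding n_def by (simp add: complex_norm_square[symmetric] mult.commute)
  let ?e = "\<lambda>k. if k = i then - complex_of_real x * A i j else if k = j then 1 else 0"
  have "qform_on S A ?e = A j j - 2 * complex_of_real x * complex_of_real n"
    unfolding qform_on_two_point[OF assms(2-4) \<open>i \<noteq> j\<close>] zero
      psd_on_hermitian[OF assms(1-4)] n[symmetric]
    by (simp add: algebra_simps)
  moreover have "Re (A j j - 2 * complex_of_real x * complex_of_real n) = -1"
    using x by simp
  ultimately show False
    using psd_onD[OF assms(1), of ?e] by (simp add: less_eq_complex_def)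
qed

lemma psd_on_schur_complement:
  assumes psd: "psd_on (insert x T) A" and "finite T" "x \<notin> T" and pivot: "A x x \<noteq> 0"
  shows "psd_on T (\<lambda>i j. A i j - A i x * A x j / A x x)"
  unfolding psd_on_def
proof
  fix v
  define \<beta> where "\<beta> = (\<Sum>j\<in>T. A x j * v j)"
  define \<gamma> where "\<gamma> = (\<Sum>i\<in>T. cnj (v i) * A i x)"
  define v' where "v' = v(x := - \<beta> / A x x)"
  have real_pivot: "cnj (A x x) = A x x"
    using psd_on_hermitian[OF psd, of x x] \<open>finite T\<close> by simp
  have "(\<Sum>j\<in>T. A x j * v' j) = \<beta>" "(\<Sum>i\<in>T. cnj (v' i) * A i x) = \<gamma>"
    "qform_on T A v' = qform_on T A v"
    unfolding \<beta>_def \<gamma>_def v'_def using \<open>x \<notin> T\<close>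
    by (auto intro!: sum.cong qform_on_cong)
  \<comment> \<open>\<open>v'\<close> extends \<open>v\<close> by the coordinate minimising the quadratic form in direction \<open>e\<^sub>x\<close>\<close>
  then have "qform_on (insert x T) A v' = qform_on T A v - \<gamma> * \<beta> / A x x"
    unfolding qform_on_insert[OF \<open>finite T\<close> \<open>x \<notin> T\<close>]
    using pivot real_pivot by (simp add: v'_def field_simps)
  also have "\<dots> = qform_on T (\<lambda>i j. A i j - A i x * A x j / A x x) v"
    unfolding qform_on_def \<gamma>_def \<beta>_def
    by (simp add: sum_subtractf sum_distrib_left sum_distrib_right sum_divide_distrib algebra_simps)
  finally show "0 \<le> qform_on T (\<lambda>i j. A i j - A i x * A x j / A x x) v"
    using psd_onD[OF psd, of v'] by simp
qed

lemma rank_one_sum_extend: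
  assumes "\<forall>i\<in>T. \<forall>j\<in>T. B i j = (\<Sum>m<n. V m i * cnj (V m j))"
  shows "\<exists>W. \<forall>i\<in>insert x T. \<forall>j\<in>insert x T.
    u i * cnj (u j) + (if i = x \<or> j = x then 0 else B i j) = (\<Sum>m<Suc n. W m i * cnj (W m j))"
proof -
  define W where "W m = (if m = n then u else (V m)(x := 0))" for m
  have "(\<Sum>m<Suc n. W m i * cnj (W m j)) = (\<Sum>m<n. ((V m)(x:=0)) i * cnj (((V m)(x:=0)) j)) + u i * cnj (u j)"
    for i j by (simp add: W_def)
  then show ?thesis
    using assms by (intro exI[of _ W]) auto
qed

lemma psd_on_rank_one_sum:
  assumes "finite S" "psd_on S A"
  shows "\<exists>(n::nat) V. \<forall>i\<in>S. \<forall>j\<in>S. A i j = (\<Sum>m<n. V m i * cnj (V m j))"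
  using assms
proof (induction S arbitrary: A rule: finite_induct)
  case empty
  then show ?case by auto
next
  case (insert x T)
  have herm: "A j i = cnj (A i j)" if "i \<in> insert x T" "j \<in> insert x T" for i j
    using insert(1) that by (intro psd_on_hermitian[OF insert(4)]) simp_all
  \<comment> \<open>peel off the rank-one term \<open>u u\<^sup>*\<close> carrying row and column \<open>x\<close>, and recurse on the rest\<close>
  obtain u B where psd_B: "psd_on T B"
    and split: "\<And>i j. i \<in> insert x T \<Longrightarrow> j \<in> insert x T \<Longrightarrow>
       A i j = u i * cnj (u j) + (if i = x \<or> j = x then 0 else B i j)"
  proof (cases "A x x = 0")
    case True
    have "A x j = 0" "A j x = 0" if "j \<in> insert x T" for j
      using psd_on_zero_diag_row[OF insert(4) _ _ that True] herm[OF _ that] insert(1) by auto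
    then have "A i j = (if i = x \<or> j = x then 0 else A i j)"
      if "i \<in> insert x T" "j \<in> insert x T" for i j
      using that by auto
    moreover have "psd_on T A"
      using psd_on_subset[OF insert(4)] insert(1) by blast
    ultimately show ?thesis
      using that[of A "\<lambda>_. 0"] by simp
  next
    case False
    define r where "r = Re (A x x)"
    have "0 \<le> A x x" using psd_on_diag_nonneg[OF insert(4)] insert(1) by simp
    then have pivot: "A x x = complex_of_real r" and "r > 0"
      using False unfolding r_def by (auto simp: less_eq_complex_def complex_eq_iff)
    define u where "u i = A i x / complex_of_real (sqrt r)" for i
    have u: "u i * cnj (u j) = A i x * A x j / A x x" if "j \<in> insert x T" for i j
    proof -
      have "complex_of_real (sqrt r) * complex_of_real (sqrt r) = complex_of_real r"
        using \<open>r > 0\<close> by (simp flip: of_real_mult)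
      moreover have "A x j = cnj (A j x)"
        using herm[of j x] that by simp
      ultimately show ?thesis
        unfolding u_def pivot by (simp add: complex_cnj_divide)
    qed
    show ?thesis
      using that[OF psd_on_schur_complement[OF insert(4,1,2) False], of u] u pivot \<open>r > 0\<close>
      by auto
  qed
  obtain n :: nat and V where "\<forall>i\<in>T. \<forall>j\<in>T. B i j = (\<Sum>m<n. V m i * cnj (V m j))"
    using insert(3)[OF psd_B] by blast
  from rank_one_sum_extend[OF this, of x u] split show ?case by metis
qed

definition matrix_unit :: "'b \<Rightarrow> 'b \<Rightarrow> 'b cmat" where
  "matrix_unit r s = (\<lambda>i j. if i = r then if j = s then 1 else 0 else 0)"

definition choi_matrix :: "('b cmat \<Rightarrow> 'c cmat) \<Rightarrow> ('c \<times> 'b) cmat" where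
  "choi_matrix L = (\<lambda>(c, b) (c', b'). L (matrix_unit b b') c c')"

lemma clinear_map_add_apply:
  "clinear_map L \<Longrightarrow> L (\<lambda>i j. A i j + B i j) p q = L A p q + L B p q"
  unfolding clinear_map_def by metis

lemma clinear_map_scale_apply:
  "clinear_map L \<Longrightarrow> L (\<lambda>i j. c * A i j) p q = c * L A p q"
  unfolding clinear_map_def by metis

lemma clinear_map_sum_apply:
  assumes "clinear_map L" "finite M"
  shows "L (\<lambda>i j. \<Sum>m\<in>M. F m i j) p q = (\<Sum>m\<in>M. L (F m) p q)"
  using assms(2)
proof (induction M rule: finite_induct)
  case empty
  then show ?case
    using clinear_map_scale_apply[OF assms(1), of 0 "\<lambda>i j. 0"] by simp
next
  case (insert m M)
  then show ?case
    using clinear_map_add_apply[OF assms(1), of "F m" "\<lambda>i j. \<Sum>m\<in>M. F m i j"] by simp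
qed

lemma clinear_map_expand:
  fixes L :: "('b::finite) cmat \<Rightarrow> 'c cmat"
  assumes "clinear_map L"
  shows "L A p q = (\<Sum>r\<in>UNIV. \<Sum>s\<in>UNIV. A r s * L (matrix_unit r s) p q)"
proof -
  have "A = (\<lambda>i j. \<Sum>r\<in>UNIV. \<Sum>s\<in>UNIV. A r s * matrix_unit r s i j)"
    by (simp add: matrix_unit_def if_distrib[where f="\<lambda>x. _ * x"] if_distrib[where f="\<lambda>x. x * _"]
        sum.If_cases cong: if_cong)
  then have "L A p q = L (\<lambda>i j. \<Sum>r\<in>UNIV. \<Sum>s\<in>UNIV. A r s * matrix_unit r s i j) p q"
    by simp
  also have "\<dots> = (\<Sum>r\<in>UNIV. \<Sum>s\<in>UNIV. L (\<lambda>i j. A r s * matrix_unit r s i j) p q)"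
    by (simp add: clinear_map_sum_apply[OF assms])
  finally show ?thesis
    by (simp add: clinear_map_scale_apply[OF assms])
qed

lemma id_tensor_eq_choi_contraction:
  fixes L :: "('b::finite) cmat \<Rightarrow> 'c cmat"
  assumes "clinear_map L"
  shows "id_tensor L A (i, p) (j, q)
    = (\<Sum>r\<in>UNIV. \<Sum>s\<in>UNIV. A (i, r) (j, s) * choi_matrix L (p, r) (q, s))"
  unfolding id_tensor_def choi_matrix_def
  by (simp add: clinear_map_expand[OF assms, of "\<lambda>r s. A (i, r) (j, s)"])

lemma sum_Times_split: "(\<Sum>x\<in>A \<times> B. f x) = (\<Sum>a\<in>A. \<Sum>b\<in>B. f (a, b))"
  by (simp add: sum.cartesian_product)

lemma sum_UNIV_Times_split: "(\<Sum>x\<in>UNIV. f x) = (\<Sum>a\<in>UNIV. \<Sum>b\<in>UNIV. f (a, b))"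
  by (metis UNIV_Times_UNIV sum_Times_split)

lemma qform_on_choi_congruence:
  fixes K :: "('c::finite \<times> 'b::finite) cmat" and v :: "nat \<times> 'b \<Rightarrow> complex"
  shows "qform_on ({..<k} \<times> UNIV)
      (\<lambda>(i, p) (j, q). \<Sum>r\<in>UNIV. \<Sum>s\<in>UNIV. v (i, r) * cnj (v (j, s)) * K (p, r) (q, s)) w
    = qform K (\<lambda>(p, r). \<Sum>i<k. w (i, p) * cnj (v (i, r)))"
  unfolding qform_on_def sum_Times_split sum_UNIV_Times_split
  by (simp add: sum_distrib_left sum_distrib_right mult_ac
     sum.swap[where A="{..<k}" and B="UNIV::'c set"] sum.swap[where A="{..<k}" and B="UNIV::'b set"]
     sum.swap[where A="UNIV::'c set" and B="UNIV::'b set"])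

lemma completely_positive_if_psd_choi:
  fixes L :: "('b::finite) cmat \<Rightarrow> ('c::finite) cmat"
  assumes lin: "clinear_map L" and choi: "psd (choi_matrix L)"
  shows "completely_positive L"
  unfolding completely_positive_def
proof (intro allI impI)
  fix k :: nat and A :: "(nat \<times> 'b) cmat"
  assume "psd_on ({..<k} \<times> UNIV) A"
  then obtain n :: nat and V
    where V: "\<And>P Q. P \<in> {..<k} \<times> UNIV \<Longrightarrow> Q \<in> {..<k} \<times> UNIV \<Longrightarrow> A P Q = (\<Sum>m<n. V m P * cnj (V m Q))"
    using psd_on_rank_one_sum[of "{..<k} \<times> UNIV" A] by auto
  define R where "R m = (\<lambda>(i, p) (j, q). \<Sum>r\<in>UNIV. \<Sum>s\<in>UNIV.
      V m (i, r) * cnj (V m (j, s)) * choi_matrix L (p, r) (q, s))" for m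
  have id_tensor_A: "id_tensor L A P Q = (\<Sum>m<n. R m P Q)"
    if "P \<in> {..<k} \<times> UNIV" "Q \<in> {..<k} \<times> UNIV" for P Q :: "nat \<times> 'c"
    using that unfolding R_def
    by (auto simp: id_tensor_eq_choi_contraction[OF lin] V sum_distrib_right sum.swap[where A="{..<n}"])
  show "psd_on ({..<k} \<times> UNIV) (id_tensor L A)"
    unfolding psd_on_def
  proof
    fix w
    have "qform_on ({..<k} \<times> UNIV) (id_tensor L A) w = (\<Sum>m<n. qform_on ({..<k} \<times> UNIV) (R m) w)"
      by (simp add: qform_on_cong_mat[OF id_tensor_A] qform_on_sum)
    also have "\<dots> = (\<Sum>m<n. qform (choi_matrix L) (\<lambda>(p, r). \<Sum>i<k. w (i, p) * cnj (V m (i, r))))"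
      unfolding R_def by (simp add: qform_on_choi_congruence)
    finally show "0 \<le> qform_on ({..<k} \<times> UNIV) (id_tensor L A) w"
      using choi by (simp add: psd_onD sum_nonneg)
  qed
qed

lemma psd_on_scaleD:
  assumes "psd_on S (\<lambda>i j. c * A i j)" "0 < c"
  shows "psd_on S A"
  unfolding psd_on_def
proof
  fix v
  have "0 \<le> c * qform_on S A v"
    using psd_onD[OF assms(1), of v] by (simp add: qform_on_scale)
  then show "0 \<le> qform_on S A v"
    using assms(2) by (auto simp: less_eq_complex_def less_complex_def zero_le_mult_iff)
qed

definition partial_qform :: "('p::finite \<Rightarrow> complex) \<Rightarrow> ('p \<times> 'x) cmat \<Rightarrow> 'x cmat" where
  "partial_qform \<alpha> W = (\<lambda>x x'. \<Sum>p\<in>UNIV. \<Sum>p'\<in>UNIV. cnj (\<alpha> p) * W (p, x) (p', x') * \<alpha> p')"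

lemma qform_partial_qform:
  fixes W :: "('p::finite \<times> 'x::finite) cmat"
  shows "qform (partial_qform \<alpha> W) y = qform W (\<lambda>(p, x). \<alpha> p * y x)"
  unfolding qform_on_def partial_qform_def sum_UNIV_Times_split
  by (simp add: sum_distrib_left sum_distrib_right mult_ac
     sum.swap[where A="UNIV::'p set" and B="UNIV::'x set"])

lemma psd_partial_qform:
  fixes W :: "('p::finite \<times> 'x::finite) cmat"
  shows "psd W \<Longrightarrow> psd (partial_qform \<alpha> W)"
  unfolding psd_on_def by (simp add: qform_partial_qform)

lemma partial_qform_kron:
  fixes X Y :: "('p::finite) cmat" and D D' E :: "'r::finite \<Rightarrow> 'r \<Rightarrow> complex"
  shows "(\<Sum>p\<in>UNIV. \<Sum>p'\<in>UNIV. cnj (\<alpha> p) * (\<Sum>r\<in>UNIV. \<Sum>s\<in>UNIV. (X p p' * D r s + Y p p' * D' r s) * E r s) * \<alpha> p')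
    = (\<Sum>r\<in>UNIV. \<Sum>s\<in>UNIV. (qform X \<alpha> * D r s + qform Y \<alpha> * D' r s) * E r s)"
  unfolding qform_on_def
  by (simp add: sum_distrib_left sum_distrib_right sum.distrib algebra_simps
     sum.swap[where A="UNIV::'p set" and B="UNIV::'r set"])

lemma omega_eq:
  fixes b :: "'b::finite"
  shows "omega (r, b) (s, b') = (if r = b \<and> s = b' then 1 / of_nat (card (UNIV :: 'b set)) else 0)"
proof -
  let ?\<rho> = "complex_of_real (1 / sqrt (real (card (UNIV :: 'b set))))"
  have "?\<rho> * ?\<rho> = 1 / of_nat (card (UNIV :: 'b set))"
    by (simp flip: of_real_mult)
  then show ?thesis
    unfolding omega_def Omega_vec_def by simp
qed

lemma partial_qform_apply_A2:
  fixes X Y :: "('a::finite \<times> 'a) cmat" and L :: "('b::finite) cmat \<Rightarrow> ('c::finite) cmat"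
  assumes lin: "clinear_map L" and "qform X \<alpha> = 0"
  shows "partial_qform \<alpha> (apply_A2 L (\<lambda>p q. kron X (\<lambda>u w. idm u w - omega u w) p q + kron Y omega p q))
    = (\<lambda>x x'. qform Y \<alpha> / of_nat (card (UNIV :: 'b set)) * choi_matrix L x x')"
proof (intro ext, clarify)
  fix c b c' b'
  let ?Z = "\<lambda>p q. kron X (\<lambda>u w. idm u w - omega u w) p q + kron Y omega p q"
  have "apply_A2 L ?Z (p, c, b) (p', c', b') = (\<Sum>r\<in>UNIV. \<Sum>s\<in>UNIV.
      (X p p' * (idm (r, b) (s, b') - omega (r, b) (s, b')) + Y p p' * omega (r, b) (s, b'))
        * L (matrix_unit r s) c c')" for p p'
    unfolding apply_A2_def by (simp, subst clinear_map_expand[OF lin], simp add: kron_def)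
  then have "partial_qform \<alpha> (apply_A2 L ?Z) (c, b) (c', b') = (\<Sum>r\<in>UNIV. \<Sum>s\<in>UNIV.
      qform Y \<alpha> * omega (r, b) (s, b') * L (matrix_unit r s) c c')"
    unfolding partial_qform_def by (simp add: partial_qform_kron assms(2))
  also have "\<dots> = qform Y \<alpha> / of_nat (card (UNIV :: 'b set)) * choi_matrix L (c, b) (c', b')"
    by (simp add: omega_eq choi_matrix_def conj_commute[of "_ = b"] if_if_eq_conj[symmetric]
        if_distrib[where f="\<lambda>x. _ * x"] if_distrib[where f="\<lambda>x. x * _"] cong: if_cong)
  finally show "partial_qform \<alpha> (apply_A2 L ?Z) (c, b) (c', b')
      = qform Y \<alpha> / of_nat (card (UNIV :: 'b set)) * choi_matrix L (c, b) (c', b')" .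
qed

theorem lemma2:
  fixes X Y :: "('a::finite \<times> 'a) cmat"
    and L :: "('b::finite) cmat \<Rightarrow> ('c::finite) cmat"
  assumes "hermitian X" and "hermitian Y"
    and "\<exists>\<alpha>. qform X \<alpha> = 0 \<and> qform Y \<alpha> > 0"
    and "clinear_map L"
    and "\<not> completely_positive L"
  shows "\<not> psd (apply_A2 L (\<lambda>p q. kron X (\<lambda>u w. idm u w - omega u w) p q + kron Y omega p q))"
proof
  let ?Z = "\<lambda>p q. kron X (\<lambda>u w. idm u w - omega u w) p q + kron Y omega p q"
  assume "psd (apply_A2 L ?Z)"
  obtain \<alpha> where X\<alpha>: "qform X \<alpha> = 0" and Y\<alpha>: "qform Y \<alpha> > 0"
    using assms(3) by blast
  let ?c = "qform Y \<alpha> / of_nat (card (UNIV :: 'b set))"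
  have "psd (partial_qform \<alpha> (apply_A2 L ?Z))"
    using \<open>psd (apply_A2 L ?Z)\<close> by (rule psd_partial_qform)
  then have "psd (\<lambda>x x'. ?c * choi_matrix L x x')"
    by (simp only: partial_qform_apply_A2[OF assms(4) X\<alpha>])
  moreover have "0 < ?c"
    using Y\<alpha> by (simp add: less_complex_def finite_UNIV_card_ge_0)
  ultimately have "psd (choi_matrix L)"
    by (rule psd_on_scaleD)
  then show False
    using assms(5) completely_positive_if_psd_choi[OF assms(4)] by blast
qed

end
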